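(* Consider an adaptive sampling algorithm and stopping rule. For a fixed arm $k \in [k^*]$ and a random time $\tau$, assume $N_k(\tau) \geq b$ almost surely for a constant $b\ge 3$. Then, for any $\delta \geq 1$, \[ \mathbb{P}\left(\frac{N_k(\tau)}{\log\log N_k(\tau)}\, D_{\psi^*_{\mu_k}}(\hat{\mu}_k(\tau) , \mu_k) \geq C_b \delta\right) \leq 2\exp\left\{-\delta\right\}, \] where $C_b := 4e\left(1 + \frac{1}{\log\log b}\right)$.
   Context: Stochastic multi-armed bandit with arms $P_1,\dots,P_{k^*}$ having means $\mu_k$; arms sampled adaptively ($A_t$ drawn from $\nu_t(\cdot\mid$ past data$)$, $Y_t\sim P_{A_t}$), $N_k(t)$ the number of draws of arm $k$ up to time $t$, $\hat\mu_k(t)$ its sample mean; $\tau$ is an arbitrary random time (not necessarily a stopping time). Arm $k$ is sub-$\psi$: $\log\mathbb{E}[e^{\lambda(Y-\mu_k)}]\le\psi(\lambda)$ for $\lambda\in\Lambda\ni 0$, with $\psi$ nonnegative, twice continuously differentiable, strictly convex, $\psi(0)=\psi'(0)=0$. $\psi_\mu^*$ is the convex conjugate of $\lambda\mapsto\lambda\mu+\psi(\lambda)$ and $D_{\psi_\mu^*}(\hat\mu,\mu)=\psi_\mu^*(\hat\mu)-\psi_\mu^*(\mu)-\psi_\mu^{*\prime}(\mu)(\hat\mu-\mu)$ is the associated Bregman divergence. *)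

theory Defs
  imports "HOL-Probability.Probability"
begin

definition num_pulls :: "(nat \<Rightarrow> 'm \<Rightarrow> nat) \<Rightarrow> nat \<Rightarrow> nat \<Rightarrow> 'm \<Rightarrow> nat" where
  "num_pulls A k t \<omega> = card {s \<in> {1..t}. A s \<omega> = k}"

definition sample_mean ::
  "(nat \<Rightarrow> 'm \<Rightarrow> nat) \<Rightarrow> (nat \<Rightarrow> 'm \<Rightarrow> real) \<Rightarrow> nat \<Rightarrow> nat \<Rightarrow> 'm \<Rightarrow> real" where
  "sample_mean A Y k t \<omega> =
     (\<Sum>s\<in>{s \<in> {1..t}. A s \<omega> = k}. Y s \<omega>) / real (num_pulls A k t \<omega>)"

definition strictly_convex_on :: "real set \<Rightarrow> (real \<Rightarrow> real) \<Rightarrow> bool" where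
  "strictly_convex_on S f \<longleftrightarrow>
     (\<forall>x\<in>S. \<forall>y\<in>S. \<forall>u::real. x \<noteq> y \<and> 0 < u \<and> u < 1 \<longrightarrow>
        f (u * x + (1 - u) * y) < u * f x + (1 - u) * f y)"

definition psi_conj :: "real set \<Rightarrow> (real \<Rightarrow> real) \<Rightarrow> real \<Rightarrow> real \<Rightarrow> ereal" where
  "psi_conj \<Lambda> \<psi> \<mu> x = (SUP l\<in>\<Lambda>. ereal (l * x - (l * \<mu> + \<psi> l)))"

definition psi_bregman :: "real set \<Rightarrow> (real \<Rightarrow> real) \<Rightarrow> real \<Rightarrow> real \<Rightarrow> real \<Rightarrow> ereal" where
  "psi_bregman \<Lambda> \<psi> \<mu> x y =
     psi_conj \<Lambda> \<psi> \<mu> x - psi_conj \<Lambda> \<psi> \<mu> y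
       - ereal (deriv (\<lambda>z. real_of_ereal (psi_conj \<Lambda> \<psi> \<mu> z)) y * (x - y))"

end

theory Submission
  imports Defs
begin

text \<open>For every \<open>l \<in> \<Lambda>\<close> the process \<open>exp (l S\<^sub>t - \<psi>(l) N\<^sub>t)\<close>, with \<open>S\<^sub>t\<close> the centred reward sum and
  \<open>N\<^sub>t\<close> the number of pulls of arm \<open>k\<close>, is a nonnegative supermartingale. By Ville's inequality it
  ever exceeds \<open>e\<^sup>r\<close> with probability at most \<open>e\<^sup>-\<^sup>r\<close>; the bound is uniform in time, so the random
  time \<open>\<tau>\<close> need not be a stopping time. The conjugate \<open>\<psi>\<^sup>*\<close> vanishes to first order at 0, so the
  Bregman divergence at the mean is \<open>\<psi>\<^sup>*(S/N)\<close>, and \<open>N \<psi>\<^sup>*(S/N) > n c\<close> with \<open>N \<ge> n\<close> forces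
  \<open>l S - \<psi>(l) N \<ge> n c\<close> for some \<open>l\<close>. Peeling \<open>N\<^sub>k(\<tau>)\<close> into the epochs \<open>[b e\<^sup>j, b e\<^sup>j\<^sup>+\<^sup>1)\<close>, with levels
  whose failure probabilities \<open>(ln b + j)\<^sup>-\<^sup>q\<close> sum to at most \<open>e\<^sup>-\<^sup>\<delta>\<close>, and treating both signs of
  the deviation separately, gives the bound.\<close>

section \<open>The conjugate of \<open>\<psi>\<close>\<close>

definition psi_star :: "real set \<Rightarrow> (real \<Rightarrow> real) \<Rightarrow> real \<Rightarrow> ereal" where
  "psi_star \<Lambda> \<psi> w = (SUP l\<in>\<Lambda>. ereal (l * w - \<psi> l))"

lemma psi_conj_eq_psi_star: "psi_conj \<Lambda> \<psi> \<mu> x = psi_star \<Lambda> \<psi> (x - \<mu>)"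
  unfolding psi_conj_def psi_star_def by (intro SUP_cong refl) (simp add: algebra_simps)

locale psi_function =
  fixes \<Lambda> :: "real set" and \<psi> :: "real \<Rightarrow> real"
  assumes zero_in_\<Lambda>: "0 \<in> \<Lambda>" and open_\<Lambda>: "open \<Lambda>" and interval_\<Lambda>: "is_interval \<Lambda>"
    and psi_0: "\<psi> 0 = 0" and psi_nonneg: "\<And>l. l \<in> \<Lambda> \<Longrightarrow> \<psi> l \<ge> 0"
    and psi_strictly_convex: "strictly_convex_on \<Lambda> \<psi>"
begin

lemma psi_star_ge: "l \<in> \<Lambda> \<Longrightarrow> ereal (l * w - \<psi> l) \<le> psi_star \<Lambda> \<psi> w"
  unfolding psi_star_def by (rule SUP_upper)

lemma psi_star_nonneg: "psi_star \<Lambda> \<psi> w \<ge> 0"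
  using psi_star_ge[OF zero_in_\<Lambda>, of w] by (simp add: psi_0 zero_ereal_def)

lemma psi_star_0: "psi_star \<Lambda> \<psi> 0 = 0"
proof (rule antisym)
  show "psi_star \<Lambda> \<psi> 0 \<le> 0"
    unfolding psi_star_def by (rule SUP_least) (simp add: psi_nonneg)
qed (rule psi_star_nonneg)

lemma psi_star_gtE:
  assumes "psi_star \<Lambda> \<psi> w > ereal c" "c \<ge> 0"
  obtains l where "l \<in> \<Lambda>" "l * w - \<psi> l > c" "l * w > 0"
proof -
  obtain l where l: "l \<in> \<Lambda>" "l * w - \<psi> l > c"
    using assms(1) unfolding psi_star_def by (subst (asm) less_SUP_iff) auto
  moreover have "l * w > 0" using l psi_nonneg[OF l(1)] assms(2) by linarith
  ultimately show thesis by (rule that)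
qed

text \<open>The hypothesis \<open>0 \<le> w * (w' - w)\<close> says that \<open>w'\<close> lies beyond \<open>w\<close>, on the same side of 0.\<close>
lemma psi_star_gt_away:
  assumes gt: "psi_star \<Lambda> \<psi> w > ereal c" and c: "c \<ge> 0" and away: "0 \<le> w * (w' - w)"
  shows "psi_star \<Lambda> \<psi> w' > ereal c"
proof -
  obtain l where l: "l \<in> \<Lambda>" "l * w - \<psi> l > c" "l * w > 0" using psi_star_gtE[OF gt c] .
  have "0 \<le> (l * w) * (w * (w' - w))" using l(3) away by simp
  also have "\<dots> = w\<^sup>2 * (l * (w' - w))" by (simp add: power2_eq_square algebra_simps)
  finally have "0 \<le> w\<^sup>2 * (l * (w' - w))" .
  moreover have "w\<^sup>2 > 0" using l(3) by (cases "w = 0") auto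
  ultimately have "0 \<le> l * (w' - w)" by (simp add: zero_le_mult_iff)
  then have "ereal c < ereal (l * w' - \<psi> l)" using l(2) by (simp add: algebra_simps)
  also have "\<dots> \<le> psi_star \<Lambda> \<psi> w'" by (rule psi_star_ge[OF l(1)])
  finally show ?thesis .
qed

lemma psi_scaled_less:
  assumes "l \<in> \<Lambda>" "l \<noteq> 0" "0 < u" "u < 1"
  shows "\<psi> (u * l) < u * \<psi> l"
  using psi_strictly_convex[unfolded strictly_convex_on_def, rule_format, of l 0 u] assms zero_in_\<Lambda>
  by (simp add: psi_0)

lemma scaled_in_\<Lambda>:
  assumes "l \<in> \<Lambda>" "0 \<le> u" "u \<le> 1"
  shows "u * l \<in> \<Lambda>"
proof -
  have "u * l \<in> closed_segment 0 l"
    using assms unfolding closed_segment_def by (auto intro!: exI[of _ u])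
  then show ?thesis
    using assms(1) zero_in_\<Lambda> interval_\<Lambda> by (meson is_interval_convex convex_contains_segment subsetD)
qed

lemma psi_pos: "l \<in> \<Lambda> \<Longrightarrow> l \<noteq> 0 \<Longrightarrow> \<psi> l > 0"
  using psi_scaled_less[of l "1/2"] psi_nonneg[OF scaled_in_\<Lambda>, of l "1/2"] by simp

text \<open>Outside \<open>[-e, e]\<close>, convexity makes \<open>\<psi>\<close> grow at least linearly with slope
  \<open>min (\<psi> e) (\<psi> (-e)) / e\<close>; this beats \<open>l * w\<close> once \<open>\<bar>w\<bar>\<close> is small.\<close>
lemma psi_star_le_linear_near_0:
  assumes "\<epsilon> > 0"
  obtains d where "d > 0" "\<And>w. \<bar>w\<bar> < d \<Longrightarrow> psi_star \<Lambda> \<psi> w \<le> ereal (\<epsilon> * \<bar>w\<bar>)"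
proof -
  obtain r where r: "r > 0" "ball 0 r \<subseteq> \<Lambda>" using open_\<Lambda> zero_in_\<Lambda> openE by blast
  define e where "e = min \<epsilon> (r / 2)"
  have e: "e > 0" "e \<le> \<epsilon>" "e \<in> \<Lambda>" "-e \<in> \<Lambda>"
    using assms r by (auto simp: e_def intro!: subsetD[OF r(2)])
  define m where "m = min (\<psi> e) (\<psi> (-e))"
  have m: "m > 0" using psi_pos[OF e(3)] psi_pos[OF e(4)] e(1) by (simp add: m_def)
  have "psi_star \<Lambda> \<psi> w \<le> ereal (\<epsilon> * \<bar>w\<bar>)" if w: "\<bar>w\<bar> < m / e" for w
    unfolding psi_star_def
  proof (rule SUP_least)
    fix l assume l: "l \<in> \<Lambda>"
    have "l * w \<le> \<bar>l\<bar> * \<bar>w\<bar>" by (metis abs_ge_self abs_mult)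
    have "l * w - \<psi> l \<le> \<epsilon> * \<bar>w\<bar>"
    proof (cases "\<bar>l\<bar> \<le> e")
      case True
      then have "\<bar>l\<bar> * \<bar>w\<bar> \<le> \<epsilon> * \<bar>w\<bar>" using e by (intro mult_right_mono) auto
      then show ?thesis using \<open>l * w \<le> \<bar>l\<bar> * \<bar>w\<bar>\<close> psi_nonneg[OF l] by linarith
    next
      case False
      define u where "u = e / \<bar>l\<bar>"
      have u: "0 < u" "u < 1" using False e by (auto simp: u_def)
      have "u * l = e \<or> u * l = -e" using False e(1) by (auto simp: u_def abs_if)
      then have "m \<le> \<psi> (u * l)" by (auto simp: m_def)
      also have "\<dots> < u * \<psi> l" using psi_scaled_less[OF l _ u] False e(1) by auto
      finally have "\<bar>l\<bar> * m < e * \<psi> l" using False e by (simp add: u_def field_simps)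
      moreover have "\<bar>l\<bar> * (e * \<bar>w\<bar>) \<le> \<bar>l\<bar> * m"
        using w e(1) by (intro mult_left_mono) (simp_all add: field_simps)
      ultimately have "e * (\<bar>l\<bar> * \<bar>w\<bar>) < e * \<psi> l" by (simp add: algebra_simps)
      then have "\<bar>l\<bar> * \<bar>w\<bar> < \<psi> l" using e(1) by simp
      then show ?thesis using \<open>l * w \<le> \<bar>l\<bar> * \<bar>w\<bar>\<close> assms by (smt (verit) abs_ge_zero mult_nonneg_nonneg)
    qed
    then show "ereal (l * w - \<psi> l) \<le> ereal (\<epsilon> * \<bar>w\<bar>)" by simp
  qed
  moreover have "m / e > 0" using m e by simp
  ultimately show thesis using that by blast
qed

lemma psi_star_has_derivative_0:
  "((\<lambda>w. real_of_ereal (psi_star \<Lambda> \<psi> w)) has_real_derivative 0) (at 0)"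
proof -
  define f where "f = (\<lambda>w. real_of_ereal (psi_star \<Lambda> \<psi> w))"
  have "((\<lambda>w. f w / w) \<longlongrightarrow> 0) (at 0)"
  proof (rule tendstoI)
    fix \<epsilon> :: real assume "\<epsilon> > 0"
    then obtain d where d: "d > 0" "\<And>w. \<bar>w\<bar> < d \<Longrightarrow> psi_star \<Lambda> \<psi> w \<le> ereal (\<epsilon> / 2 * \<bar>w\<bar>)"
      using psi_star_le_linear_near_0[of "\<epsilon> / 2"] by auto
    have "dist (f w / w) 0 < \<epsilon>" if "w \<noteq> 0" "\<bar>w\<bar> < d" for w
    proof -
      have "0 \<le> f w" "f w \<le> \<epsilon> / 2 * \<bar>w\<bar>"
        using psi_star_nonneg[of w] d(2)[OF that(2)] unfolding f_def
        by (cases "psi_star \<Lambda> \<psi> w"; simp)+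
      then have "f w / \<bar>w\<bar> \<le> \<epsilon> / 2" using that by (simp add: divide_le_eq)
      moreover have "dist (f w / w) 0 = f w / \<bar>w\<bar>"
        using \<open>0 \<le> f w\<close> by (simp add: dist_real_def abs_divide)
      ultimately show ?thesis using \<open>\<epsilon> > 0\<close> by linarith
    qed
    then show "\<forall>\<^sub>F w in at 0. dist (f w / w) 0 < \<epsilon>"
      unfolding eventually_at using d(1) by (auto simp: dist_real_def)
  qed
  then show ?thesis by (simp add: has_field_derivative_iff f_def psi_star_0)
qed

lemma psi_bregman_at_mean: "psi_bregman \<Lambda> \<psi> \<mu> x \<mu> = psi_star \<Lambda> \<psi> (x - \<mu>)"
proof -
  have "((\<lambda>w. real_of_ereal (psi_star \<Lambda> \<psi> w)) has_real_derivative 0) (at (\<mu> - \<mu>))"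
    using psi_star_has_derivative_0 by simp
  from DERIV_chain2[OF this DERIV_diff[OF DERIV_ident DERIV_const]]
  have "((\<lambda>z. real_of_ereal (psi_star \<Lambda> \<psi> (z - \<mu>))) has_real_derivative 0) (at \<mu>)"
    by simp
  then have "deriv (\<lambda>z. real_of_ereal (psi_conj \<Lambda> \<psi> \<mu> z)) \<mu> = 0"
    by (simp add: psi_conj_eq_psi_star DERIV_imp_deriv)
  then show ?thesis
    by (simp add: psi_bregman_def psi_conj_eq_psi_star psi_star_0 zero_ereal_def[symmetric])
qed

end

section \<open>Peeling arithmetic\<close>

lemma one_less_ln_of_ge_3: "3 \<le> x \<Longrightarrow> 1 < ln (x::real)"
  using e_less_272 ln_less_cancel_iff[of "exp 1" x] by simp

lemma ln_ln_pos_of_ge_3: "3 \<le> x \<Longrightarrow> 0 < ln (ln (x::real))"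
  using one_less_ln_of_ge_3 by simp

text \<open>Comparison with the telescoping series \<open>\<Sum> 1/(x - 1) - 1/x\<close>, using \<open>q \<ge> 2\<close>.\<close>
lemma shifted_power_series_bound:
  fixes L q :: real assumes L: "L > 1" and q: "q \<ge> 2"
  shows "summable (\<lambda>j::nat. exp (- (q * ln (L + real j))))"
    and "(\<Sum>j. exp (- (q * ln (L + real j)))) \<le> exp (- (q * ln L)) + exp ((1 - q) * ln L)"
proof -
  define g where "g = (\<lambda>j::nat. exp (- (q * ln (L + real j))))"
  define c where "c = exp ((2 - q) * ln L)"
  have g_Suc_le: "g (Suc j) \<le> c * (1 / (L + real j) - 1 / (L + real (Suc j)))" for j
  proof -
    define x where "x = L + real (Suc j)"
    have x: "x > 1" "x \<ge> L" using L by (auto simp: x_def)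
    have "g (Suc j) = exp ((2 - q) * ln x) * exp (- (2 * ln x))"
      by (simp add: g_def x_def flip: exp_add) (simp add: algebra_simps)
    also have "exp (- (2 * ln x)) = 1 / x\<^sup>2"
    proof -
      have "exp (2 * ln x) = x powr 2" using x by (simp add: powr_def)
      then show ?thesis using x by (simp add: exp_minus inverse_eq_divide powr_numeral)
    qed
    also have "exp ((2 - q) * ln x) * (1 / x\<^sup>2) \<le> c * (1 / x\<^sup>2)"
      unfolding c_def using q x L by (intro mult_right_mono) (auto intro: mult_left_mono_neg)
    also have "\<dots> \<le> c * (1 / (x - 1) - 1 / x)"
      using x by (intro mult_left_mono) (auto simp: c_def field_simps power2_eq_square)
    finally show ?thesis by (simp add: x_def)
  qed
  have partial: "(\<Sum>j<Suc n. g j) \<le> exp (- (q * ln L)) + c * (1 / L - 1 / (L + real n))" for n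
  proof (induction n)
    case (Suc n)
    then show ?case using g_Suc_le[of n] by (simp add: algebra_simps)
  qed (simp add: g_def)
  have "c / L = exp ((2 - q) * ln L - ln L)" unfolding c_def exp_diff using L by simp
  also have "(2 - q) * ln L - ln L = (1 - q) * ln L" by (simp add: algebra_simps)
  finally have "c / L = exp ((1 - q) * ln L)" .
  define B where "B = exp (- (q * ln L)) + exp ((1 - q) * ln L)"
  have partial_B: "(\<Sum>j<n. g j) \<le> B" for n
  proof -
    have "(\<Sum>j<n. g j) \<le> (\<Sum>j<Suc n. g j)" by (simp add: g_def)
    also have "\<dots> \<le> exp (- (q * ln L)) + c * (1 / L - 1 / (L + real n))" by (rule partial)
    also have "\<dots> \<le> B"
      using L \<open>c / L = exp ((1 - q) * ln L)\<close> by (simp add: B_def c_def right_diff_distrib)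
    finally show ?thesis .
  qed
  have "summable g" by (rule summableI_nonneg_bounded[of g B]) (simp add: g_def, rule partial_B)
  then show "summable (\<lambda>j::nat. exp (- (q * ln (L + real j))))" by (simp add: g_def)
  from suminf_le_const[OF \<open>summable g\<close> partial_B]
  show "(\<Sum>j. exp (- (q * ln (L + real j)))) \<le> exp (- (q * ln L)) + exp ((1 - q) * ln L)"
    by (simp add: g_def B_def)
qed

lemma peeling_series:
  fixes b \<delta> :: real assumes b: "b \<ge> 3" and \<delta>: "\<delta> \<ge> 1"
  defines "q \<equiv> 2 * \<delta> * (1 + 1 / ln (ln b))"
  shows "summable (\<lambda>j::nat. exp (- (q * ln (ln b + real j))))"
    and "(\<Sum>j. exp (- (q * ln (ln b + real j)))) \<le> exp (- \<delta>)"
proof -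
  define L where "L = ln b"
  have L: "L > 1" "ln L > 0" using one_less_ln_of_ge_3[OF b] by (auto simp: L_def)
  have "2 * \<delta> * 1 \<le> q" unfolding q_def L_def[symmetric] using \<delta> L by (intro mult_left_mono) auto
  then have q2: "q \<ge> 2" using \<delta> by linarith
  show "summable (\<lambda>j::nat. exp (- (q * ln (ln b + real j))))"
    using shifted_power_series_bound(1)[OF L(1) q2] by (simp add: L_def)
  have qL: "q * ln L = 2 * \<delta> * ln L + 2 * \<delta>" using L by (simp add: q_def L_def field_simps)
  have e1: "exp (- (q * ln L)) \<le> exp (- (2 * \<delta>))" using qL L \<delta> by simp
  have "(1 - q) * ln L = ln L * (1 - 2 * \<delta>) - 2 * \<delta>" using qL by (simp add: algebra_simps)
  then have e2: "exp ((1 - q) * ln L) \<le> exp (- (2 * \<delta>))"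
    using L \<delta> by (simp add: mult_nonneg_nonpos)
  have "2 \<le> exp \<delta>" using exp_ge_add_one_self[of \<delta>] \<delta> by linarith
  then have "2 * exp (- (2 * \<delta>)) \<le> exp \<delta> * exp (- (2 * \<delta>))" by simp
  also have "\<dots> = exp (- \<delta>)" by (simp flip: exp_add)
  finally have e3: "2 * exp (- (2 * \<delta>)) \<le> exp (- \<delta>)" .
  have "(\<Sum>j. exp (- (q * ln (ln b + real j)))) \<le> exp (- (q * ln L)) + exp ((1 - q) * ln L)"
    using shifted_power_series_bound(2)[OF L(1) q2] by (simp only: L_def)
  with e1 e2 e3 show "(\<Sum>j. exp (- (q * ln (ln b + real j)))) \<le> exp (- \<delta>)" by linarith
qed

text \<open>\<open>n\<close> lies in the epoch \<open>[b e\<^sup>j, b e\<^sup>j\<^sup>+\<^sup>1)\<close> with \<open>j = \<lfloor>ln (n / b)\<rfloor>\<close>; the constant \<open>4 e\<close> absorbs the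
  factor \<open>e\<close> lost by replacing \<open>n\<close> with the left end of its epoch, with a factor 2 to spare.\<close>
lemma peeling_epoch:
  fixes b \<delta> n :: real and X :: ereal
  assumes b: "b \<ge> 3" and \<delta>: "\<delta> > 0" and n: "b \<le> n"
    and X: "ereal (4 * exp 1 * (1 + 1 / ln (ln b)) * \<delta>) \<le> ereal (n / ln (ln n)) * X"
  obtains j :: nat where "b * exp (real j) \<le> n"
    and "ereal (2 * \<delta> * (1 + 1 / ln (ln b)) * ln (ln b + real j) / (b * exp (real j))) < X"
proof -
  define Z where "Z = 1 + 1 / ln (ln b)"
  define j where "j = nat \<lfloor>ln (n / b)\<rfloor>"
  define N where "N = b * exp (real j)"
  have Z: "Z > 0" using ln_ln_pos_of_ge_3[OF b] by (simp add: Z_def add_pos_pos)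
  have "0 \<le> ln (n / b)" using b n by simp
  then have j: "real j \<le> ln (n / b)" "ln (n / b) < real j + 1"
    unfolding j_def by linarith+
  have n_eq: "n = b * exp (ln (n / b))" using b n by simp
  have N_le: "N \<le> n" unfolding N_def using j(1) b by (subst n_eq) simp
  have n_less: "n < exp 1 * N"
    unfolding N_def using j(2) b by (subst n_eq) (simp add: mult.left_commute flip: exp_add)
  have N: "N > 0" using b by (simp add: N_def)
  have lnN: "ln N = ln b + real j" using b by (simp add: N_def ln_mult)
  have lnlnb: "0 < ln (ln b + real j)" using one_less_ln_of_ge_3[OF b] by simp
  have "ln b + real j \<le> ln n" using N_le N by (simp flip: lnN)
  then have lnln_le: "ln (ln b + real j) \<le> ln (ln n)"
    using one_less_ln_of_ge_3[OF b] by (subst ln_le_cancel_iff) auto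
  have n3: "n \<ge> 3" using b n by linarith
  have lnln_n: "0 < ln (ln n)" by (rule ln_ln_pos_of_ge_3[OF n3])
  define c where "c = 2 * \<delta> * Z * ln (ln b + real j) / N"
  have "0 < c" using \<delta> Z lnlnb N by (simp add: c_def)
  then have "c < 2 * c" by simp
  also have "2 * c = 4 * exp 1 * Z * \<delta> * ln (ln b + real j) / (exp 1 * N)"
    using N by (simp add: c_def field_simps)
  also have "\<dots> < 4 * exp 1 * Z * \<delta> * ln (ln b + real j) / n"
    using n_less n3 \<delta> Z lnlnb by (intro divide_strict_left_mono) auto
  also have "\<dots> \<le> 4 * exp 1 * Z * \<delta> * ln (ln n) / n"
    using lnln_le n3 \<delta> Z by (intro divide_right_mono mult_left_mono) auto
  finally have c_less: "c < 4 * exp 1 * Z * \<delta> / (n / ln (ln n))" by simp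
  have "ereal c < X"
  proof (cases X)
    case (real x)
    then have "4 * exp 1 * Z * \<delta> \<le> n / ln (ln n) * x" using X by (simp add: Z_def)
    moreover have "n / ln (ln n) > 0" using n3 lnln_n by simp
    ultimately have "4 * exp 1 * Z * \<delta> / (n / ln (ln n)) \<le> x"
      by (metis pos_divide_le_eq mult.commute)
    then show ?thesis using c_less real by simp
  next
    case MInf
    then show ?thesis using X n3 lnln_n by simp
  qed simp
  then show thesis using that N_le by (simp add: c_def Z_def N_def)
qed

section \<open>The exponential supermartingale of an adaptively sampled arm\<close>

lemma (in prob_space) nn_integral_exp_minus_le_1:
  assumes int: "integrable M (\<lambda>x. exp (f x))" and le: "ln (\<integral>x. exp (f x) \<partial>M) \<le> p"
  shows "(\<integral>\<^sup>+x. ennreal (exp (f x - p)) \<partial>M) \<le> 1"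
proof -
  define E where "E = (\<integral>x. exp (f x) \<partial>M)"
  have "(\<integral>x. 0 \<partial>M) < E"
    unfolding E_def by (rule integral_less_AE_space) (auto simp: int emeasure_space_1)
  then have "E \<le> exp p" using le unfolding E_def by (metis exp_le_cancel_iff exp_ln integral_zero)
  have "(\<integral>\<^sup>+x. ennreal (exp (f x - p)) \<partial>M) = (\<integral>\<^sup>+x. ennreal (exp (f x) * exp (- p)) \<partial>M)"
    by (simp add: exp_diff exp_minus divide_inverse)
  also have "\<dots> = ennreal (E * exp (- p))"
    using int by (subst nn_integral_eq_integral) (auto simp: E_def)
  also have "\<dots> \<le> 1" using \<open>E \<le> exp p\<close> by (simp add: exp_minus field_simps)
  finally show ?thesis .
qed

locale adaptive_sampling = prob_space M for M :: "'m measure" +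
  fixes F :: "nat \<Rightarrow> 'm measure" and k :: nat and P :: "nat \<Rightarrow> real measure"
    and A :: "nat \<Rightarrow> 'm \<Rightarrow> nat" and Y :: "nat \<Rightarrow> 'm \<Rightarrow> real"
  assumes subalgebra_F: "\<And>t. subalgebra M (F t)"
    and sets_F_mono: "\<And>s t. s \<le> t \<Longrightarrow> sets (F s) \<subseteq> sets (F t)"
    and prob_space_P: "prob_space (P k)"
    and sets_P: "sets (P k) = sets borel"
    and A_measurable: "\<And>t. t \<ge> 1 \<Longrightarrow> A t \<in> measurable (F (t - 1)) (count_space UNIV)"
    and Y_measurable: "\<And>t. t \<ge> 1 \<Longrightarrow> Y t \<in> borel_measurable (F t)"
    and Y_law: "\<And>t B. t \<ge> 1 \<Longrightarrow> B \<in> sets borel \<Longrightarrow>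
        AE \<omega> in M. real_cond_exp M (F (t - 1)) (\<lambda>\<omega>'. indicator B (Y t \<omega>')) \<omega>
                     = measure (P (A t \<omega>)) B"
begin

lemma finite_measure_P: "finite_measure (P k)"
  using prob_space_P by (simp add: prob_space_def)

lemma space_F [simp]: "space (F t) = space M"
  using subalgebra_F[of t] by (simp add: subalgebra_def)

lemma sets_F_subset: "X \<in> sets (F t) \<Longrightarrow> X \<in> sets M"
  using subalgebra_F[of t] by (auto simp add: subalgebra_def)

lemma measurable_F_mono: "s \<le> t \<Longrightarrow> f \<in> measurable (F s) N \<Longrightarrow> f \<in> measurable (F t) N"
  using sets_F_mono[of s t] measurable_from_subalg[of "F t" "F s"] by (simp add: subalgebra_def)

lemma measurable_F_M: "f \<in> measurable (F t) N \<Longrightarrow> f \<in> measurable M N"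
  using measurable_from_subalg subalgebra_F by blast

lemma pull_event_in_F: "1 \<le> s \<Longrightarrow> s \<le> Suc t \<Longrightarrow> {\<omega> \<in> space M. A s \<omega> = j} \<in> sets (F t)"
  using measurable_sets[OF measurable_F_mono[OF _ A_measurable], of s t "{j}"]
  by (simp add: vimage_def Int_def conj_commute)

lemma Y_measurable_F: "1 \<le> s \<Longrightarrow> s \<le> t \<Longrightarrow> Y s \<in> borel_measurable (F t)"
  using Y_measurable measurable_F_mono by blast

lemma Y_measurable_M: "Y (Suc t) \<in> borel_measurable M"
  using Y_measurable[of "Suc t"] measurable_F_M by auto

text \<open>Integrate the conditional law of \<open>Y_law\<close> over \<open>H\<close>, where it is constantly \<open>P k\<close>.\<close>
lemma emeasure_pull_reward:
  assumes H: "H \<in> sets (F t)" and HA: "H \<subseteq> {\<omega>. A (Suc t) \<omega> = k}" and B: "B \<in> sets borel"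
  shows "emeasure M (H \<inter> Y (Suc t) -` B) = emeasure M H * emeasure (P k) B"
proof -
  have sfs: "sigma_finite_subalgebra M (F t)"
    by (rule finite_measure_subalgebra_is_sigma_finite)
       (simp add: finite_measure_subalgebra_def finite_measure_subalgebra_axioms_def
          subalgebra_F finite_measure_axioms)
  have HM: "H \<in> sets M" using H sets_F_subset by blast
  define g where "g = (\<lambda>\<omega>. indicator B (Y (Suc t) \<omega>) :: real)"
  have gm: "g \<in> borel_measurable M"
    unfolding g_def using measurable_compose[OF Y_measurable_M borel_measurable_indicator[OF B]] .
  have gi: "integrable M g"
    by (rule integrable_const_bound[where B=1]) (simp add: g_def indicator_def, rule gm)
  have "(\<integral>x \<in> H. g x \<partial>M) = (\<integral>x \<in> H. real_cond_exp M (F t) g x \<partial>M)"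
    using sigma_finite_subalgebra.real_cond_exp_intA[OF sfs gi H] .
  also have "\<dots> = (\<integral>x \<in> H. measure (P k) B \<partial>M)"
  proof (rule set_lebesgue_integral_cong_AE)
    have "AE \<omega> in M. real_cond_exp M (F t) g \<omega> = measure (P (A (Suc t) \<omega>)) B"
      using Y_law[of "Suc t" B] B by (simp add: g_def)
    then show "AE x\<in>H in M. real_cond_exp M (F t) g x = measure (P k) B"
      by eventually_elim (use HA in auto)
  qed (use HM borel_measurable_cond_exp2 in auto)
  also have "\<dots> = measure M H * measure (P k) B"
    using HM by (simp add: set_integral_const emeasure_eq_measure)
  finally have eq: "(\<integral>x \<in> H. g x \<partial>M) = measure M H * measure (P k) B" .
  have HYM: "H \<inter> Y (Suc t) -` B \<in> sets M"
  proof -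
    have "H \<inter> (Y (Suc t) -` B \<inter> space M) \<in> sets M" using HM Y_measurable_M B by measurable
    moreover have "H \<inter> (Y (Suc t) -` B \<inter> space M) = H \<inter> Y (Suc t) -` B"
      using sets.sets_into_space[OF HM] by auto
    ultimately show ?thesis by simp
  qed
  have "(\<integral>x \<in> H. g x \<partial>M) = measure M (H \<inter> Y (Suc t) -` B)"
    unfolding set_lebesgue_integral_def g_def
    using HYM by (simp add: indicator_inter_arith[symmetric] indicator_vimage[symmetric] mult.commute)
  then show ?thesis
    using eq HM HYM finite_measure.emeasure_eq_measure[OF finite_measure_P]
    by (simp add: emeasure_eq_measure ennreal_mult[symmetric])
qed

lemma distr_pull_reward_eq_pair_measure:
  fixes X :: "'m \<Rightarrow> ennreal"
  assumes G: "G \<in> sets (F t)" and GA: "G \<subseteq> {\<omega>. A (Suc t) \<omega> = k}"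
    and X: "X \<in> borel_measurable (F t)"
  shows "distr (density M (indicator G)) borel X \<Otimes>\<^sub>M P k
       = distr (density M (indicator G)) (borel \<Otimes>\<^sub>M borel) (\<lambda>\<omega>. (X \<omega>, Y (Suc t) \<omega>))"
proof -
  have GM: "G \<in> sets M" using G sets_F_subset by blast
  have XM: "X \<in> borel_measurable M" using X measurable_F_M by blast
  define MG where "MG = density M (indicator G)"
  have sets_MG [simp]: "sets MG = sets M" "space MG = space M" by (simp_all add: MG_def)
  have XMG: "X \<in> borel_measurable MG" using XM by (simp add: measurable_cong_sets[OF sets_MG(1) refl])
  have XYm: "(\<lambda>\<omega>. (X \<omega>, Y (Suc t) \<omega>)) \<in> measurable MG (borel \<Otimes>\<^sub>M borel)"
    using measurable_Pair[OF XM Y_measurable_M] by (simp add: measurable_cong_sets[OF sets_MG(1) refl])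
  define M1 where "M1 = distr MG borel X"
  define Q where "Q = distr MG (borel \<Otimes>\<^sub>M borel) (\<lambda>\<omega>. (X \<omega>, Y (Suc t) \<omega>))"
  have sets_M1 [simp]: "sets M1 = sets borel" by (simp add: M1_def)
  have emeasure_M1: "emeasure M1 C = emeasure M (G \<inter> (X -` C \<inter> space M))" if C: "C \<in> sets borel" for C
  proof -
    have "emeasure M1 C = emeasure MG (X -` C \<inter> space M)"
      unfolding M1_def using XMG C by (simp add: emeasure_distr)
    then show ?thesis
      unfolding MG_def using GM measurable_sets[OF XM C] by (simp add: emeasure_restricted)
  qed
  have "finite_measure M1"
    by (rule finite_measureI) (simp add: emeasure_M1[of UNIV] sets_eq_imp_space_eq[OF sets_M1] emeasure_eq_measure)
  then have sf1: "sigma_finite_measure M1" by (simp add: finite_measure_def)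
  have sf2: "sigma_finite_measure (P k)" using finite_measure_P by (simp add: finite_measure_def)
  have sets_prod: "sets (M1 \<Otimes>\<^sub>M P k) = sets (borel \<Otimes>\<^sub>M (borel :: real measure))"
    by (rule sets_pair_measure_cong) (simp_all add: sets_P)
  have "M1 \<Otimes>\<^sub>M P k = Q"
  proof (rule pair_measure_eqI[OF sf1 sf2])
    show "sets (M1 \<Otimes>\<^sub>M P k) = sets Q" using sets_prod by (simp add: Q_def)
    fix C B assume C: "C \<in> sets M1" and B: "B \<in> sets (P k)"
    then have C': "C \<in> sets borel" and B': "B \<in> sets borel" using sets_P by auto
    define H where "H = G \<inter> (X -` C \<inter> space M)"
    have HF: "H \<in> sets (F t)"
      using sets.Int[OF G measurable_sets[OF X C']] by (simp add: H_def)
    have CB: "C \<times> B \<in> sets (borel \<Otimes>\<^sub>M borel)" using C' B' by simp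
    have "emeasure Q (C \<times> B) = emeasure MG ((\<lambda>\<omega>. (X \<omega>, Y (Suc t) \<omega>)) -` (C \<times> B) \<inter> space M)"
      unfolding Q_def using XYm CB by (simp add: emeasure_distr)
    also have "\<dots> = emeasure M (G \<inter> ((\<lambda>\<omega>. (X \<omega>, Y (Suc t) \<omega>)) -` (C \<times> B) \<inter> space M))"
      unfolding MG_def using GM measurable_sets[OF XYm CB] by (simp add: emeasure_restricted)
    also have "G \<inter> ((\<lambda>\<omega>. (X \<omega>, Y (Suc t) \<omega>)) -` (C \<times> B) \<inter> space M) = H \<inter> Y (Suc t) -` B"
      by (auto simp: H_def)
    also have "emeasure M \<dots> = emeasure M H * emeasure (P k) B"
      using emeasure_pull_reward[OF HF _ B'] GA by (auto simp: H_def)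
    finally show "emeasure M1 C * emeasure (P k) B = emeasure Q (C \<times> B)"
      using emeasure_M1[OF C'] by (simp add: H_def)
  qed
  then show ?thesis by (simp add: M1_def Q_def MG_def)
qed

lemma nn_integral_pull_reward:
  fixes X :: "'m \<Rightarrow> ennreal" and f :: "real \<Rightarrow> ennreal"
  assumes G: "G \<in> sets (F t)" and GA: "G \<subseteq> {\<omega>. A (Suc t) \<omega> = k}"
    and X: "X \<in> borel_measurable (F t)" and f: "f \<in> borel_measurable borel"
  shows "(\<integral>\<^sup>+\<omega>. indicator G \<omega> * (X \<omega> * f (Y (Suc t) \<omega>)) \<partial>M)
       = (\<integral>\<^sup>+\<omega>. indicator G \<omega> * X \<omega> \<partial>M) * (\<integral>\<^sup>+y. f y \<partial>P k)"
proof -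
  have GM: "G \<in> sets M" using G sets_F_subset by blast
  have XM: "X \<in> borel_measurable M" using X measurable_F_M by blast
  define MG where "MG = density M (indicator G)"
  have sets_MG: "sets MG = sets M" by (simp add: MG_def)
  have XMG: "X \<in> borel_measurable MG" using XM by (simp add: measurable_cong_sets[OF sets_MG refl])
  have XYm: "(\<lambda>\<omega>. (X \<omega>, Y (Suc t) \<omega>)) \<in> measurable MG (borel \<Otimes>\<^sub>M borel)"
    using measurable_Pair[OF XM Y_measurable_M] by (simp add: measurable_cong_sets[OF sets_MG refl])
  define M1 where "M1 = distr MG borel X"
  define Q where "Q = distr MG (borel \<Otimes>\<^sub>M borel) (\<lambda>\<omega>. (X \<omega>, Y (Suc t) \<omega>))"
  have prod_eq: "M1 \<Otimes>\<^sub>M P k = Q"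
    unfolding M1_def Q_def MG_def by (rule distr_pull_reward_eq_pair_measure[OF G GA X])
  have sets_M1: "sets M1 = sets borel" by (simp add: M1_def)
  have sf2: "sigma_finite_measure (P k)" using finite_measure_P by (simp add: finite_measure_def)
  have sets_prod: "sets (M1 \<Otimes>\<^sub>M P k) = sets (borel \<Otimes>\<^sub>M (borel :: real measure))"
    by (rule sets_pair_measure_cong) (simp_all add: sets_M1 sets_P)
  have fm: "(\<lambda>p. fst p * f (snd p)) \<in> borel_measurable (borel \<Otimes>\<^sub>M borel)"
    using f by measurable
  have "(\<integral>\<^sup>+\<omega>. indicator G \<omega> * (X \<omega> * f (Y (Suc t) \<omega>)) \<partial>M)
      = (\<integral>\<^sup>+\<omega>. X \<omega> * f (Y (Suc t) \<omega>) \<partial>MG)"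
    unfolding MG_def using GM XM Y_measurable_M f by (subst nn_integral_density) auto
  also have "\<dots> = (\<integral>\<^sup>+p. fst p * f (snd p) \<partial>Q)"
    unfolding Q_def using XYm fm by (subst nn_integral_distr) auto
  also have "\<dots> = (\<integral>\<^sup>+p. fst p * f (snd p) \<partial>(M1 \<Otimes>\<^sub>M P k))"
    using prod_eq by simp
  also have "\<dots> = (\<integral>\<^sup>+x. \<integral>\<^sup>+y. x * f y \<partial>P k \<partial>M1)"
    using sigma_finite_measure.nn_integral_fst[OF sf2, of "\<lambda>p. fst p * f (snd p)" M1] fm
    by (simp add: measurable_cong_sets[OF sets_prod refl])
  also have "\<dots> = (\<integral>\<^sup>+x. x * (\<integral>\<^sup>+y. f y \<partial>P k) \<partial>M1)"
    using f by (subst nn_integral_cmult) (auto simp: measurable_cong_sets[OF sets_P refl])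
  also have "\<dots> = (\<integral>\<^sup>+x. x \<partial>M1) * (\<integral>\<^sup>+y. f y \<partial>P k)"
    by (subst nn_integral_multc) (auto simp: measurable_cong_sets[OF sets_M1 refl])
  also have "(\<integral>\<^sup>+x. x \<partial>M1) = (\<integral>\<^sup>+\<omega>. indicator G \<omega> * X \<omega> \<partial>M)"
  proof -
    have "(\<integral>\<^sup>+x. x \<partial>M1) = (\<integral>\<^sup>+\<omega>. X \<omega> \<partial>MG)"
      unfolding M1_def using XMG by (subst nn_integral_distr) auto
    also have "\<dots> = (\<integral>\<^sup>+\<omega>. indicator G \<omega> * X \<omega> \<partial>M)"
      unfolding MG_def using GM XM by (subst nn_integral_density) auto
    finally show ?thesis .
  qed
  finally show ?thesis .
qed

definition centred_sum :: "real \<Rightarrow> nat \<Rightarrow> 'm \<Rightarrow> real" where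
  "centred_sum \<mu> t \<omega> = (\<Sum>s\<in>{1..t}. if A s \<omega> = k then Y s \<omega> - \<mu> else 0)"

text \<open>\<open>exp (log_supermart \<mu> l p t)\<close> is the process \<open>exp (l S\<^sub>t - p N\<^sub>t)\<close>, a supermartingale
  whenever \<open>p\<close> bounds the cumulant generating function of \<open>P k - \<mu>\<close> at \<open>l\<close>.\<close>
definition log_supermart :: "real \<Rightarrow> real \<Rightarrow> real \<Rightarrow> nat \<Rightarrow> 'm \<Rightarrow> real" where
  "log_supermart \<mu> l p t \<omega> = (\<Sum>s\<in>{1..t}. if A s \<omega> = k then l * (Y s \<omega> - \<mu>) - p else 0)"

lemma num_pulls_eq_sum: "real (num_pulls A k t \<omega>) = (\<Sum>s\<in>{1..t}. if A s \<omega> = k then 1 else 0)"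
  by (simp add: num_pulls_def sum.inter_filter[symmetric])

lemma log_supermart_eq:
  "log_supermart \<mu> l p t \<omega> = l * centred_sum \<mu> t \<omega> - p * real (num_pulls A k t \<omega>)"
  unfolding log_supermart_def centred_sum_def num_pulls_eq_sum
  by (auto simp: sum_distrib_left sum_subtractf[symmetric] if_distrib algebra_simps intro!: sum.cong)

lemma sample_mean_minus_eq:
  assumes "num_pulls A k t \<omega> > 0"
  shows "sample_mean A Y k t \<omega> - \<mu> = centred_sum \<mu> t \<omega> / real (num_pulls A k t \<omega>)"
proof -
  have "centred_sum \<mu> t \<omega>
      = (\<Sum>s\<in>{1..t}. if A s \<omega> = k then Y s \<omega> else 0) - \<mu> * real (num_pulls A k t \<omega>)"
    unfolding centred_sum_def num_pulls_eq_sum sum_distrib_left sum_subtractf[symmetric]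
    by (intro sum.cong) auto
  also have "(\<Sum>s\<in>{1..t}. if A s \<omega> = k then Y s \<omega> else 0) = (\<Sum>s\<in>{s \<in> {1..t}. A s \<omega> = k}. Y s \<omega>)"
    by (rule sum.inter_filter[symmetric]) simp
  finally have "centred_sum \<mu> t \<omega> = (\<Sum>s\<in>{s \<in> {1..t}. A s \<omega> = k}. Y s \<omega>) - \<mu> * real (num_pulls A k t \<omega>)" .
  then show ?thesis using assms by (simp add: sample_mean_def field_simps)
qed

lemma log_supermart_Suc:
  "log_supermart \<mu> l p (Suc t) \<omega>
     = log_supermart \<mu> l p t \<omega> + (if A (Suc t) \<omega> = k then l * (Y (Suc t) \<omega> - \<mu>) - p else 0)"
  by (simp add: log_supermart_def)

lemma log_supermart_measurable_F: "s \<le> t \<Longrightarrow> log_supermart \<mu> l p s \<in> borel_measurable (F t)"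
  unfolding log_supermart_def
proof (intro borel_measurable_sum)
  fix i assume "s \<le> t" "i \<in> {1..s}"
  then have "{\<omega> \<in> space (F t). A i \<omega> = k} \<in> sets (F t)" "Y i \<in> borel_measurable (F t)"
    using pull_event_in_F[of i t k] Y_measurable_F[of i t] by auto
  then show "(\<lambda>\<omega>. if A i \<omega> = k then l * (Y i \<omega> - \<mu>) - p else 0) \<in> borel_measurable (F t)"
    by (intro measurable_If) auto
qed

lemma log_supermart_measurable: "log_supermart \<mu> l p t \<in> borel_measurable M"
  using log_supermart_measurable_F[of t t] measurable_F_M by blast

lemma centred_sum_measurable: "centred_sum \<mu> t \<in> borel_measurable M"
proof -
  have "centred_sum \<mu> t = log_supermart \<mu> 1 0 t" by (simp add: fun_eq_iff log_supermart_eq)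
  then show ?thesis using log_supermart_measurable by simp
qed

lemma num_pulls_measurable: "(\<lambda>\<omega>. real (num_pulls A k t \<omega>)) \<in> borel_measurable M"
proof -
  have "(\<lambda>\<omega>. real (num_pulls A k t \<omega>)) = log_supermart 0 0 (-1) t"
    by (simp add: fun_eq_iff log_supermart_eq)
  then show ?thesis using log_supermart_measurable by simp
qed

fun stopped_supermart :: "real \<Rightarrow> real \<Rightarrow> real \<Rightarrow> real \<Rightarrow> nat \<Rightarrow> 'm \<Rightarrow> ennreal" where
  "stopped_supermart \<mu> l p c 0 \<omega> = ennreal (exp (log_supermart \<mu> l p 0 \<omega>))"
| "stopped_supermart \<mu> l p c (Suc t) \<omega> =
     (if \<forall>s\<le>t. exp (log_supermart \<mu> l p s \<omega>) < c
      then ennreal (exp (log_supermart \<mu> l p (Suc t) \<omega>)) else stopped_supermart \<mu> l p c t \<omega>)"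

lemma not_yet_stopped_in_F: "{\<omega>\<in>space M. \<forall>s\<le>t. exp (log_supermart \<mu> l p s \<omega>) < c} \<in> sets (F t)"
proof -
  have "{\<omega>\<in>space (F t). \<forall>s. s \<le> t \<longrightarrow> exp (log_supermart \<mu> l p s \<omega>) < c} \<in> sets (F t)"
  proof (rule sets.sets_Collect_countable_All)
    fix s
    show "{\<omega>\<in>space (F t). s \<le> t \<longrightarrow> exp (log_supermart \<mu> l p s \<omega>) < c} \<in> sets (F t)"
    proof (cases "s \<le> t")
      case True
      then have [measurable]: "log_supermart \<mu> l p s \<in> borel_measurable (F t)"
        by (rule log_supermart_measurable_F)
      have "{\<omega>\<in>space (F t). exp (log_supermart \<mu> l p s \<omega>) < c} \<in> sets (F t)" by measurable
      then show ?thesis using True by simp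
    next
      case False
      then have "{\<omega>\<in>space (F t). s \<le> t \<longrightarrow> exp (log_supermart \<mu> l p s \<omega>) < c} = space (F t)"
        by auto
      then show ?thesis using sets.top[of "F t"] by simp
    qed
  qed
  then show ?thesis unfolding space_F .
qed

lemma stopped_supermart_eq:
  "(\<forall>s\<le>t. exp (log_supermart \<mu> l p s \<omega>) < c)
    \<Longrightarrow> stopped_supermart \<mu> l p c t \<omega> = ennreal (exp (log_supermart \<mu> l p t \<omega>))"
  by (cases t) simp_all

lemma stopped_supermart_measurable: "stopped_supermart \<mu> l p c t \<in> borel_measurable M"
proof (induction t)
  case (Suc t)
  have [measurable]: "log_supermart \<mu> l p (Suc t) \<in> borel_measurable M"
    by (rule log_supermart_measurable)
  have R: "{\<omega>\<in>space M. \<forall>s\<le>t. exp (log_supermart \<mu> l p s \<omega>) < c} \<in> sets M"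
    using not_yet_stopped_in_F sets_F_subset by blast
  show ?case unfolding stopped_supermart.simps by (rule measurable_If[OF _ Suc R]) measurable
qed (simp add: log_supermart_def)

lemma stopped_supermart_ge:
  "\<exists>t\<le>T. c \<le> exp (log_supermart \<mu> l p t \<omega>) \<Longrightarrow> ennreal c \<le> stopped_supermart \<mu> l p c T \<omega>"
proof (induction T)
  case (Suc T)
  show ?case
  proof (cases "\<forall>s\<le>T. exp (log_supermart \<mu> l p s \<omega>) < c")
    case True
    then have "c \<le> exp (log_supermart \<mu> l p (Suc T) \<omega>)" using Suc.prems
      by (metis le_Suc_eq not_le)
    then show ?thesis using True by (auto intro: ennreal_leI)
  next
    case False
    then show ?thesis using Suc.IH by (auto simp: not_less)
  qed
qed (auto intro: ennreal_leI)

lemma sets_exists_supermart_ge_upto: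
  "{\<omega>\<in>space M. \<exists>t\<le>T. c \<le> exp (log_supermart \<mu> l p t \<omega>)} \<in> sets M"
proof -
  have "{\<omega>\<in>space M. \<exists>t\<le>T. c \<le> exp (log_supermart \<mu> l p t \<omega>)}
      = (\<Union>t\<in>{..T}. {\<omega>\<in>space M. c \<le> exp (log_supermart \<mu> l p t \<omega>)})" by auto
  also have "\<dots> \<in> sets M"
  proof (intro sets.finite_UN)
    fix t
    have [measurable]: "log_supermart \<mu> l p t \<in> borel_measurable M" by (rule log_supermart_measurable)
    show "{\<omega>\<in>space M. c \<le> exp (log_supermart \<mu> l p t \<omega>)} \<in> sets M" by measurable
  qed auto
  finally show ?thesis .
qed

context
  fixes \<mu> l p :: real
  assumes mgf_le_1: "(\<integral>\<^sup>+y. ennreal (exp (l * (y - \<mu>) - p)) \<partial>P k) \<le> 1"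
begin

lemma nn_integral_supermart_Suc_le:
  assumes G: "G \<in> sets (F t)"
  shows "(\<integral>\<^sup>+\<omega>. indicator G \<omega> * ennreal (exp (log_supermart \<mu> l p (Suc t) \<omega>)) \<partial>M)
       \<le> (\<integral>\<^sup>+\<omega>. indicator G \<omega> * ennreal (exp (log_supermart \<mu> l p t \<omega>)) \<partial>M)"
proof -
  define Z where "Z = (\<lambda>\<omega>. ennreal (exp (log_supermart \<mu> l p t \<omega>)))"
  define g where "g = (\<lambda>y. ennreal (exp (l * (y - \<mu>) - p)))"
  define G2 where "G2 = G \<inter> {\<omega> \<in> space M. A (Suc t) \<omega> = k}"
  define G1 where "G1 = G - G2"
  have G2F: "G2 \<in> sets (F t)" using G pull_event_in_F[of "Suc t" t k] by (simp add: G2_def)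
  have G1F: "G1 \<in> sets (F t)" using G G2F by (simp add: G1_def)
  have GM: "G \<subseteq> space M" using sets_F_subset[OF G] sets.sets_into_space by blast
  have ZF: "Z \<in> borel_measurable (F t)" unfolding Z_def using log_supermart_measurable_F[of t t] by measurable
  have ZM: "Z \<in> borel_measurable M" using ZF measurable_F_M by blast
  have gm: "g \<in> borel_measurable borel" unfolding g_def by measurable
  have split: "indicator G \<omega> * ennreal (exp (log_supermart \<mu> l p (Suc t) \<omega>))
      = indicator G1 \<omega> * Z \<omega> + indicator G2 \<omega> * (Z \<omega> * g (Y (Suc t) \<omega>))" for \<omega>
    using GM by (auto simp: log_supermart_Suc Z_def g_def G1_def G2_def exp_add ennreal_mult indicator_def)
  have "(\<integral>\<^sup>+\<omega>. indicator G \<omega> * ennreal (exp (log_supermart \<mu> l p (Suc t) \<omega>)) \<partial>M)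
      = (\<integral>\<^sup>+\<omega>. indicator G1 \<omega> * Z \<omega> \<partial>M) + (\<integral>\<^sup>+\<omega>. indicator G2 \<omega> * (Z \<omega> * g (Y (Suc t) \<omega>)) \<partial>M)"
    unfolding split using sets_F_subset[OF G1F] sets_F_subset[OF G2F] ZM gm Y_measurable_M
    by (intro nn_integral_add) auto
  also have "(\<integral>\<^sup>+\<omega>. indicator G2 \<omega> * (Z \<omega> * g (Y (Suc t) \<omega>)) \<partial>M)
      = (\<integral>\<^sup>+\<omega>. indicator G2 \<omega> * Z \<omega> \<partial>M) * (\<integral>\<^sup>+y. g y \<partial>P k)"
    by (rule nn_integral_pull_reward[OF G2F _ ZF gm]) (auto simp: G2_def)
  also have "\<dots> \<le> (\<integral>\<^sup>+\<omega>. indicator G2 \<omega> * Z \<omega> \<partial>M)"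
    using mgf_le_1 unfolding g_def by (intro mult_left_le) auto
  also have "(\<integral>\<^sup>+\<omega>. indicator G1 \<omega> * Z \<omega> \<partial>M) + (\<integral>\<^sup>+\<omega>. indicator G2 \<omega> * Z \<omega> \<partial>M)
      = (\<integral>\<^sup>+\<omega>. indicator G1 \<omega> * Z \<omega> + indicator G2 \<omega> * Z \<omega> \<partial>M)"
    using sets_F_subset[OF G1F] sets_F_subset[OF G2F] ZM by (subst nn_integral_add) auto
  also have "\<dots> = (\<integral>\<^sup>+\<omega>. indicator G \<omega> * Z \<omega> \<partial>M)"
    by (intro nn_integral_cong) (auto simp: G1_def G2_def indicator_def)
  finally show ?thesis by (simp add: Z_def add_mono)
qed

lemma nn_integral_stopped_supermart_Suc_le:
  "(\<integral>\<^sup>+\<omega>. stopped_supermart \<mu> l p c (Suc t) \<omega> \<partial>M) \<le> (\<integral>\<^sup>+\<omega>. stopped_supermart \<mu> l p c t \<omega> \<partial>M)"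
proof -
  define R where "R = {\<omega>\<in>space M. \<forall>s\<le>t. exp (log_supermart \<mu> l p s \<omega>) < c}"
  define W where "W = stopped_supermart \<mu> l p c t"
  have RF: "R \<in> sets (F t)" unfolding R_def by (rule not_yet_stopped_in_F)
  have RM: "R \<in> sets M" "space M - R \<in> sets M" using sets_F_subset[OF RF] by auto
  have Wm: "W \<in> borel_measurable M" unfolding W_def by (rule stopped_supermart_measurable)
  have "(\<integral>\<^sup>+\<omega>. stopped_supermart \<mu> l p c (Suc t) \<omega> \<partial>M)
      = (\<integral>\<^sup>+\<omega>. indicator R \<omega> * ennreal (exp (log_supermart \<mu> l p (Suc t) \<omega>))
              + indicator (space M - R) \<omega> * W \<omega> \<partial>M)"
    by (intro nn_integral_cong) (auto simp: R_def W_def indicator_def)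
  also have "\<dots> = (\<integral>\<^sup>+\<omega>. indicator R \<omega> * ennreal (exp (log_supermart \<mu> l p (Suc t) \<omega>)) \<partial>M)
              + (\<integral>\<^sup>+\<omega>. indicator (space M - R) \<omega> * W \<omega> \<partial>M)"
    using RM Wm log_supermart_measurable[of \<mu> l p "Suc t"] by (intro nn_integral_add) auto
  also have "\<dots> \<le> (\<integral>\<^sup>+\<omega>. indicator R \<omega> * ennreal (exp (log_supermart \<mu> l p t \<omega>)) \<partial>M)
              + (\<integral>\<^sup>+\<omega>. indicator (space M - R) \<omega> * W \<omega> \<partial>M)"
    by (intro add_right_mono nn_integral_supermart_Suc_le[OF RF])
  also have "(\<integral>\<^sup>+\<omega>. indicator R \<omega> * ennreal (exp (log_supermart \<mu> l p t \<omega>)) \<partial>M)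
      = (\<integral>\<^sup>+\<omega>. indicator R \<omega> * W \<omega> \<partial>M)"
    by (intro nn_integral_cong) (auto simp: R_def W_def indicator_def stopped_supermart_eq)
  also have "(\<integral>\<^sup>+\<omega>. indicator R \<omega> * W \<omega> \<partial>M) + (\<integral>\<^sup>+\<omega>. indicator (space M - R) \<omega> * W \<omega> \<partial>M)
      = (\<integral>\<^sup>+\<omega>. indicator R \<omega> * W \<omega> + indicator (space M - R) \<omega> * W \<omega> \<partial>M)"
    using RM Wm by (intro nn_integral_add[symmetric]) auto
  also have "\<dots> = (\<integral>\<^sup>+\<omega>. W \<omega> \<partial>M)"
    using RM sets.sets_into_space by (intro nn_integral_cong) (auto simp: indicator_def)
  finally show ?thesis by (simp add: W_def)
qed

lemma prob_exists_supermart_ge_upto: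
  assumes c: "c > 0"
  shows "prob {\<omega>\<in>space M. \<exists>t\<le>T. c \<le> exp (log_supermart \<mu> l p t \<omega>)} \<le> 1 / c"
proof -
  define S where "S = {\<omega>\<in>space M. \<exists>t\<le>T. c \<le> exp (log_supermart \<mu> l p t \<omega>)}"
  have SM: "S \<in> sets M" unfolding S_def by (rule sets_exists_supermart_ge_upto)
  have W_le_1: "(\<integral>\<^sup>+\<omega>. stopped_supermart \<mu> l p c T \<omega> \<partial>M) \<le> 1"
  proof (induction T)
    case 0
    then show ?case by (simp add: log_supermart_def emeasure_space_1)
  next
    case (Suc T)
    then show ?case using nn_integral_stopped_supermart_Suc_le[of c T] by (meson order_trans)
  qed
  have "ennreal c * emeasure M S = (\<integral>\<^sup>+\<omega>. ennreal c * indicator S \<omega> \<partial>M)"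
    using SM by (simp add: nn_integral_cmult_indicator)
  also have "\<dots> \<le> (\<integral>\<^sup>+\<omega>. stopped_supermart \<mu> l p c T \<omega> \<partial>M)"
    by (intro nn_integral_mono) (auto simp: S_def indicator_def intro!: stopped_supermart_ge)
  finally have "ennreal (c * prob S) \<le> 1"
    using W_le_1 c by (simp add: emeasure_eq_measure ennreal_mult)
  then have "prob S \<le> 1 / c" using c by (simp add: ennreal_le_1 le_divide_eq mult.commute)
  then show ?thesis by (simp add: S_def)
qed

lemma prob_exists_supermart_ge: "prob {\<omega>\<in>space M. \<exists>t. r \<le> log_supermart \<mu> l p t \<omega>} \<le> exp (- r)"
proof -
  define B where "B = (\<lambda>T. {\<omega>\<in>space M. \<exists>t\<le>T. exp r \<le> exp (log_supermart \<mu> l p t \<omega>)})"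
  have "B T \<in> sets M" for T unfolding B_def by (rule sets_exists_supermart_ge_upto)
  moreover have "incseq B" unfolding incseq_def B_def by (auto intro: order_trans)
  ultimately have "(\<lambda>T. prob (B T)) \<longlonglongrightarrow> prob (\<Union>T. B T)"
    by (intro finite_Lim_measure_incseq) auto
  moreover have "prob (B T) \<le> exp (- r)" for T
    using prob_exists_supermart_ge_upto[of "exp r" T] by (simp add: B_def exp_minus inverse_eq_divide)
  ultimately have "prob (\<Union>T. B T) \<le> exp (- r)"
    by (intro LIMSEQ_le_const2) auto
  moreover have "{\<omega>\<in>space M. \<exists>t. r \<le> log_supermart \<mu> l p t \<omega>} = (\<Union>T. B T)"
    by (auto simp: B_def)
  ultimately show ?thesis by (simp only:)
qed

end

end

section \<open>Deviation bounds for a sub-\<open>\<psi>\<close> arm\<close>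

lemma (in prob_space) prob_le_suminf_of_AE_cover:
  assumes cover: "AE x in M. x \<in> S \<longrightarrow> (\<exists>j. x \<in> K j)"
    and K: "range K \<subseteq> events" and summable: "summable (\<lambda>j. prob (K j))"
  shows "prob S \<le> (\<Sum>j. prob (K j))"
proof (cases "S \<in> events")
  case True
  from cover obtain N where N: "{x\<in>space M. \<not> (x \<in> S \<longrightarrow> (\<exists>j. x \<in> K j))} \<subseteq> N" "N \<in> null_sets M"
    by (auto elim!: AE_E simp: null_sets_def)
  have "S \<subseteq> (\<Union>j. K j) \<union> N" using N(1) sets.sets_into_space[OF True] by blast
  then have "prob S \<le> prob ((\<Union>j. K j) \<union> N)" using True N K by (intro finite_measure_mono) auto
  also have "\<dots> = prob (\<Union>j. K j)" using K by (intro measure_Un_null_set[OF _ N(2)]) auto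
  also have "\<dots> \<le> (\<Sum>j. prob (K j))" using K summable by (intro finite_measure_subadditive_countably) auto
  finally show ?thesis .
qed (simp add: measure_notin_sets suminf_nonneg summable)

text \<open>A union over a half-line of levels of an antitone family of events reduces to a countable one.\<close>
lemma (in prob_space) prob_Union_halfline_le:
  fixes E :: "real \<Rightarrow> 'a set" and T :: "real set"
  assumes r: "0 \<le> r" and E_sets: "\<And>a. E a \<in> events" and E_anti: "\<And>a a'. a \<le> a' \<Longrightarrow> E a' \<subseteq> E a"
    and T_up: "\<And>a a'. a \<in> T \<Longrightarrow> a \<le> a' \<Longrightarrow> a' \<in> T" and bdd: "bdd_below T"
    and prob_E: "\<And>a. a \<in> T \<Longrightarrow> prob (E a) \<le> r"
  shows "(\<Union>a\<in>T. E a) \<in> events \<and> prob (\<Union>a\<in>T. E a) \<le> r"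
proof (cases "T = {}")
  case False
  define a0 where "a0 = Inf T"
  have a0_le: "a0 \<le> a" if "a \<in> T" for a using cInf_lower[OF that bdd] by (simp add: a0_def)
  show ?thesis
  proof (cases "a0 \<in> T")
    case True
    then have "(\<Union>a\<in>T. E a) = E a0" using a0_le E_anti by blast
    then show ?thesis using True E_sets prob_E by simp
  next
    case a0_notin: False
    define B where "B = (\<lambda>m::nat. E (a0 + 1 / (real m + 1)))"
    have in_T: "a0 + 1 / (real m + 1) \<in> T" for m
    proof -
      have "Inf T < a0 + 1 / (real m + 1)" by (simp add: a0_def)
      then obtain a where "a \<in> T" "a < a0 + 1 / (real m + 1)"
        using cInf_less_iff[OF False bdd] by auto
      then show ?thesis using T_up by simp
    qed
    have "(\<Union>a\<in>T. E a) \<subseteq> (\<Union>m. B m)"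
    proof
      fix x assume "x \<in> (\<Union>a\<in>T. E a)"
      then obtain a where a: "a \<in> T" "x \<in> E a" by blast
      then have "a0 < a" using a0_le[OF a(1)] a0_notin by (cases "a = a0") auto
      then obtain m where "inverse (real (Suc m)) < a - a0" using reals_Archimedean[of "a - a0"] by auto
      then have "a0 + 1 / (real m + 1) \<le> a" by (simp add: inverse_eq_divide add.commute)
      then show "x \<in> (\<Union>m. B m)" using E_anti a(2) unfolding B_def by blast
    qed
    moreover have "(\<Union>m. B m) \<subseteq> (\<Union>a\<in>T. E a)" using in_T by (auto simp: B_def)
    ultimately have eq: "(\<Union>a\<in>T. E a) = (\<Union>m. B m)" by blast
    have B_sets: "range B \<subseteq> events" using E_sets by (auto simp: B_def)
    have "incseq B" unfolding incseq_def B_def by (auto intro!: E_anti simp: frac_le)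
    then have "(\<lambda>m. prob (B m)) \<longlonglongrightarrow> prob (\<Union>m. B m)"
      using B_sets by (intro finite_Lim_measure_incseq) auto
    then have "prob (\<Union>m. B m) \<le> r"
      using prob_E[OF in_T] by (intro LIMSEQ_le_const2) (auto simp: B_def)
    then show ?thesis using eq B_sets by auto
  qed
qed (use r in simp)

locale sub_psi_arm = adaptive_sampling M F k P A Y + psi_function \<Lambda> \<psi>
  for M :: "'m measure" and F k P A Y \<Lambda> \<psi> +
  fixes \<mu> :: real
  assumes mgf_integrable: "\<And>l. l \<in> \<Lambda> \<Longrightarrow> integrable (P k) (\<lambda>y. exp (l * (y - \<mu>)))"
    and cgf_le_psi: "\<And>l. l \<in> \<Lambda> \<Longrightarrow> ln (\<integral>y. exp (l * (y - \<mu>)) \<partial>P k) \<le> \<psi> l"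
begin

lemma prob_exists_supermart_psi_ge:
  "l \<in> \<Lambda> \<Longrightarrow> prob {\<omega>\<in>space M. \<exists>t. r \<le> log_supermart \<mu> l (\<psi> l) t \<omega>} \<le> exp (- r)"
  by (rule prob_exists_supermart_ge
      [OF prob_space.nn_integral_exp_minus_le_1[OF prob_space_P mgf_integrable cgf_le_psi]])

definition pulls :: "('m \<Rightarrow> nat) \<Rightarrow> 'm \<Rightarrow> real" where
  "pulls \<tau> \<omega> = real (num_pulls A k (\<tau> \<omega>) \<omega>)"

definition mean_dev :: "('m \<Rightarrow> nat) \<Rightarrow> 'm \<Rightarrow> real" where
  "mean_dev \<tau> \<omega> = centred_sum \<mu> (\<tau> \<omega>) \<omega> / pulls \<tau> \<omega>"

lemma pulls_measurable: "\<tau> \<in> measurable M (count_space UNIV) \<Longrightarrow> pulls \<tau> \<in> borel_measurable M"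
  unfolding pulls_def
  by (rule measurable_compose_countable'[where f="\<lambda>t \<omega>. real (num_pulls A k t \<omega>)" and I=UNIV])
     (auto intro: num_pulls_measurable)

lemma mean_dev_measurable:
  assumes \<tau>: "\<tau> \<in> measurable M (count_space UNIV)"
  shows "mean_dev \<tau> \<in> borel_measurable M"
proof -
  have "(\<lambda>\<omega>. centred_sum \<mu> (\<tau> \<omega>) \<omega>) \<in> borel_measurable M"
    by (rule measurable_compose_countable'[where f="\<lambda>t \<omega>. centred_sum \<mu> t \<omega>" and I=UNIV])
       (use \<tau> centred_sum_measurable in auto)
  with pulls_measurable[OF \<tau>] show ?thesis
    unfolding mean_dev_def by (rule borel_measurable_divide[rotated])
qed

text \<open>A deviation beyond a fixed level \<open>a\<close> after at least \<open>n\<close> pulls drives the supermartingale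
  \<open>exp (l S\<^sub>t - \<psi>(l) N\<^sub>t)\<close> above \<open>e\<^sup>n\<^sup>c\<close>, for an \<open>l\<close> nearly attaining \<open>\<psi>\<^sup>*(\<sigma> a)\<close>.\<close>
lemma prob_mean_dev_beyond_le:
  assumes n: "n > 0" and c: "c \<ge> 0" and \<sigma>: "\<sigma> * \<sigma> = 1" and a: "a > 0"
    and gt: "psi_star \<Lambda> \<psi> (\<sigma> * a) > ereal c"
  shows "prob {\<omega>\<in>space M. n \<le> pulls \<tau> \<omega> \<and> a \<le> \<sigma> * mean_dev \<tau> \<omega>} \<le> exp (- (n * c))"
proof -
  obtain l where l: "l \<in> \<Lambda>" "l * (\<sigma> * a) - \<psi> l > c" "l * (\<sigma> * a) > 0"
    using psi_star_gtE[OF gt c] .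
  have "(\<sigma> * l) * a > 0" using l(3) by (simp add: algebra_simps)
  then have \<sigma>l: "\<sigma> * l > 0" using a by (rule zero_less_mult_pos2)
  define V where "V = {\<omega>\<in>space M. \<exists>t. n * c \<le> log_supermart \<mu> l (\<psi> l) t \<omega>}"
  have "V \<in> sets M"
    unfolding V_def
  proof (rule sets.sets_Collect_countable_Ex)
    fix t
    have [measurable]: "log_supermart \<mu> l (\<psi> l) t \<in> borel_measurable M"
      by (rule log_supermart_measurable)
    show "{\<omega> \<in> space M. n * c \<le> log_supermart \<mu> l (\<psi> l) t \<omega>} \<in> sets M" by measurable
  qed
  moreover have "{\<omega>\<in>space M. n \<le> pulls \<tau> \<omega> \<and> a \<le> \<sigma> * mean_dev \<tau> \<omega>} \<subseteq> V"
  proof safe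
    fix \<omega> assume \<omega>: "\<omega> \<in> space M" "n \<le> pulls \<tau> \<omega>" "a \<le> \<sigma> * mean_dev \<tau> \<omega>"
    define N where "N = pulls \<tau> \<omega>"
    define w where "w = mean_dev \<tau> \<omega>"
    have N: "N \<ge> n" "N > 0" using \<omega> n by (auto simp: N_def)
    have "l * (\<sigma> * a) = (\<sigma> * l) * a" by (simp add: algebra_simps)
    also have "\<dots> \<le> (\<sigma> * l) * (\<sigma> * w)" using \<sigma>l \<omega>(3) unfolding w_def by (intro mult_left_mono) auto
    also have "\<dots> = l * w" using \<sigma> by (simp add: algebra_simps)
    finally have "c < l * w - \<psi> l" using l(2) by linarith
    then have "n * c \<le> N * (l * w - \<psi> l)" using N c by (intro mult_mono) auto
    also have "\<dots> = log_supermart \<mu> l (\<psi> l) (\<tau> \<omega>) \<omega>"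
      using N by (simp add: log_supermart_eq w_def N_def mean_dev_def pulls_def field_simps)
    finally show "\<omega> \<in> V" unfolding V_def using \<omega>(1) by blast
  qed
  ultimately have "prob {\<omega>\<in>space M. n \<le> pulls \<tau> \<omega> \<and> a \<le> \<sigma> * mean_dev \<tau> \<omega>} \<le> prob V"
    by (intro finite_measure_mono)
  also have "prob V \<le> exp (- (n * c))"
    unfolding V_def by (rule prob_exists_supermart_psi_ge[OF l(1)])
  finally show ?thesis .
qed

text \<open>By monotonicity of \<open>\<psi>\<^sup>*\<close> on each half-line, the levels \<open>a\<close> with \<open>\<psi>\<^sup>*(\<sigma> a) > c\<close> form a half-line.\<close>
lemma epoch_deviation_bound:
  assumes \<tau>: "\<tau> \<in> measurable M (count_space UNIV)"
    and n: "n > 0" and c: "c \<ge> 0" and \<sigma>: "\<sigma> * \<sigma> = 1"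
  obtains K where "K \<in> sets M" "prob K \<le> exp (- (n * c))"
    "{\<omega>\<in>space M. n \<le> pulls \<tau> \<omega> \<and> \<sigma> * mean_dev \<tau> \<omega> > 0
        \<and> psi_star \<Lambda> \<psi> (mean_dev \<tau> \<omega>) > ereal c} \<subseteq> K"
proof -
  define T where "T = {a. a > 0 \<and> psi_star \<Lambda> \<psi> (\<sigma> * a) > ereal c}"
  define E where "E = (\<lambda>a. {\<omega>\<in>space M. n \<le> pulls \<tau> \<omega> \<and> a \<le> \<sigma> * mean_dev \<tau> \<omega>})"
  have [measurable]: "pulls \<tau> \<in> borel_measurable M" "mean_dev \<tau> \<in> borel_measurable M"
    using pulls_measurable[OF \<tau>] mean_dev_measurable[OF \<tau>] by auto
  have T_up: "a' \<in> T" if "a \<in> T" "a \<le> a'" for a a'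
  proof -
    have "(\<sigma> * a) * (\<sigma> * a' - \<sigma> * a) = (\<sigma> * \<sigma>) * (a * (a' - a))"
      by (simp add: algebra_simps)
    also have "\<dots> \<ge> 0" using that \<sigma> by (simp add: T_def)
    finally show ?thesis using that psi_star_gt_away[OF _ c, of "\<sigma> * a" "\<sigma> * a'"] by (auto simp: T_def)
  qed
  have "(\<Union>a\<in>T. E a) \<in> sets M \<and> prob (\<Union>a\<in>T. E a) \<le> exp (- (n * c))"
  proof (rule prob_Union_halfline_le)
    show "E a \<in> sets M" for a unfolding E_def by measurable
    show "prob (E a) \<le> exp (- (n * c))" if "a \<in> T" for a
      using that unfolding E_def T_def by (intro prob_mean_dev_beyond_le[OF n c \<sigma>]) auto
    show "bdd_below T" by (rule bdd_belowI[of _ 0]) (auto simp: T_def)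
  qed (auto simp: E_def T_up)
  moreover have "\<omega> \<in> (\<Union>a\<in>T. E a)"
    if "\<omega> \<in> space M" "n \<le> pulls \<tau> \<omega>" "\<sigma> * mean_dev \<tau> \<omega> > 0" "psi_star \<Lambda> \<psi> (mean_dev \<tau> \<omega>) > ereal c"
    for \<omega>
    using that \<sigma> by (intro UN_I[of "\<sigma> * mean_dev \<tau> \<omega>"]) (auto simp: T_def E_def mult.assoc[symmetric])
  ultimately show thesis using that[of "\<Union>a\<in>T. E a"] by blast
qed

lemma bregman_deviation_in_epoch:
  assumes b: "b \<ge> 3" and \<delta>: "\<delta> > 0" and \<omega>: "b \<le> pulls \<tau> \<omega>"
    and dev: "ereal (4 * exp 1 * (1 + 1 / ln (ln b)) * \<delta>)
      \<le> ereal (pulls \<tau> \<omega> / ln (ln (pulls \<tau> \<omega>))) * psi_bregman \<Lambda> \<psi> \<mu> (sample_mean A Y k (\<tau> \<omega>) \<omega>) \<mu>"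
  obtains j \<sigma> where "\<sigma> * \<sigma> = 1" "b * exp (real j) \<le> pulls \<tau> \<omega>" "\<sigma> * mean_dev \<tau> \<omega> > 0"
    "ereal (2 * \<delta> * (1 + 1 / ln (ln b)) * ln (ln b + real j) / (b * exp (real j)))
      < psi_star \<Lambda> \<psi> (mean_dev \<tau> \<omega>)"
proof -
  have "num_pulls A k (\<tau> \<omega>) \<omega> > 0" using b \<omega> by (simp add: pulls_def)
  then have "psi_bregman \<Lambda> \<psi> \<mu> (sample_mean A Y k (\<tau> \<omega>) \<omega>) \<mu> = psi_star \<Lambda> \<psi> (mean_dev \<tau> \<omega>)"
    by (simp add: psi_bregman_at_mean sample_mean_minus_eq mean_dev_def pulls_def)
  then obtain j where j: "b * exp (real j) \<le> pulls \<tau> \<omega>"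
      "ereal (2 * \<delta> * (1 + 1 / ln (ln b)) * ln (ln b + real j) / (b * exp (real j)))
        < psi_star \<Lambda> \<psi> (mean_dev \<tau> \<omega>)"
    using peeling_epoch[OF b \<delta> \<omega>] dev by metis
  have "0 \<le> 2 * \<delta> * (1 + 1 / ln (ln b)) * ln (ln b + real j) / (b * exp (real j))"
    using b \<delta> ln_ln_pos_of_ge_3[OF b] one_less_ln_of_ge_3[OF b] by simp
  then have "mean_dev \<tau> \<omega> \<noteq> 0" using j(2) psi_star_0 by auto
  then have "1 * mean_dev \<tau> \<omega> > 0 \<or> -1 * mean_dev \<tau> \<omega> > 0" by auto
  then show thesis using that j by (metis mult_minus1 mult_1 minus_mult_minus)
qed

lemma prob_bregman_peeling:
  assumes \<tau>: "\<tau> \<in> measurable M (count_space UNIV)" and b: "b \<ge> 3" and \<delta>: "\<delta> \<ge> 1"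
    and pulls_ge_b: "AE \<omega> in M. real (num_pulls A k (\<tau> \<omega>) \<omega>) \<ge> b"
  shows "prob {\<omega> \<in> space M.
            ereal (real (num_pulls A k (\<tau> \<omega>) \<omega>) / ln (ln (real (num_pulls A k (\<tau> \<omega>) \<omega>))))
              * psi_bregman \<Lambda> \<psi> \<mu> (sample_mean A Y k (\<tau> \<omega>) \<omega>) \<mu>
            \<ge> ereal (4 * exp 1 * (1 + 1 / ln (ln b)) * \<delta>)}
         \<le> 2 * exp (- \<delta>)"
    (is "prob ?S \<le> _")
proof -
  define q where "q = 2 * \<delta> * (1 + 1 / ln (ln b))"
  define g where "g = (\<lambda>j::nat. exp (- (q * ln (ln b + real j))))"
  define c where "c = (\<lambda>j::nat. q * ln (ln b + real j) / (b * exp (real j)))"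
  define E where "E = (\<lambda>\<sigma> j. {\<omega>\<in>space M. b * exp (real j) \<le> pulls \<tau> \<omega> \<and> \<sigma> * mean_dev \<tau> \<omega> > 0
        \<and> psi_star \<Lambda> \<psi> (mean_dev \<tau> \<omega>) > ereal (c j)})"
  have q: "q > 0" using \<delta> ln_ln_pos_of_ge_3[OF b] by (simp add: q_def add_pos_pos)
  have c: "c j \<ge> 0" for j
    using q one_less_ln_of_ge_3[OF b] b by (simp add: c_def)
  have "\<exists>K. K \<in> sets M \<and> prob K \<le> g j \<and> E \<sigma> j \<subseteq> K" if \<sigma>: "\<sigma> * \<sigma> = 1" for \<sigma> j
  proof -
    have pos: "b * exp (real j) > 0" using b by simp
    obtain K where "K \<in> sets M" "prob K \<le> exp (- (b * exp (real j) * c j))" "E \<sigma> j \<subseteq> K"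
      by (rule epoch_deviation_bound[OF \<tau> pos c[of j] \<sigma>]) (simp add: E_def)
    moreover have "b * exp (real j) * c j = q * ln (ln b + real j)" using pos b by (simp add: c_def)
    ultimately show ?thesis by (auto simp: g_def)
  qed
  then obtain K where K: "\<And>\<sigma> j. \<sigma> * \<sigma> = 1 \<Longrightarrow> K \<sigma> j \<in> sets M \<and> prob (K \<sigma> j) \<le> g j \<and> E \<sigma> j \<subseteq> K \<sigma> j"
    by metis
  have "AE \<omega> in M. \<omega> \<in> ?S \<longrightarrow> (\<exists>j. \<omega> \<in> K 1 j \<union> K (-1) j)"
    using pulls_ge_b
  proof eventually_elim
    case (elim \<omega>)
    show ?case
    proof
      assume \<omega>: "\<omega> \<in> ?S"
      have "b \<le> pulls \<tau> \<omega>" using elim by (simp add: pulls_def)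
      moreover have "ereal (4 * exp 1 * (1 + 1 / ln (ln b)) * \<delta>) \<le> ereal (pulls \<tau> \<omega> / ln (ln (pulls \<tau> \<omega>)))
          * psi_bregman \<Lambda> \<psi> \<mu> (sample_mean A Y k (\<tau> \<omega>) \<omega>) \<mu>"
        using \<omega> by (simp add: pulls_def)
      moreover have "\<delta> > 0" using \<delta> by simp
      ultimately obtain j \<sigma> where "\<sigma> * \<sigma> = 1" "\<omega> \<in> E \<sigma> j"
        using bregman_deviation_in_epoch[OF b] \<omega> unfolding E_def c_def q_def by blast
      moreover from this(1) have "\<sigma> = 1 \<or> \<sigma> = -1" by (metis square_eq_1_iff)
      ultimately show "\<exists>j. \<omega> \<in> K 1 j \<union> K (-1) j" using K by blast
    qed
  qed
  moreover have "range (\<lambda>j. K 1 j \<union> K (-1) j) \<subseteq> sets M" using K by auto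
  moreover have prob_K: "prob (K 1 j \<union> K (-1) j) \<le> 2 * g j" for j
    using measure_Un_le[of "K 1 j" M "K (-1) j"] K[of 1 j] K[of "-1" j] by auto
  have summable: "summable g" using peeling_series(1)[OF b \<delta>] by (simp add: g_def q_def)
  then have summable_K: "summable (\<lambda>j. prob (K 1 j \<union> K (-1) j))"
    by (rule summable_comparison_test'[OF summable_mult[of g 2], of 0]) (simp add: prob_K)
  ultimately have "prob ?S \<le> (\<Sum>j. prob (K 1 j \<union> K (-1) j))"
    by (intro prob_le_suminf_of_AE_cover)
  also have "\<dots> \<le> (\<Sum>j. 2 * g j)"
    using prob_K summable_K summable_mult[OF summable, of 2] by (intro suminf_le) auto
  also have "\<dots> \<le> 2 * exp (- \<delta>)"
    using suminf_mult[OF summable, of 2] peeling_series(2)[OF b \<delta>] by (simp add: g_def q_def)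
  finally show ?thesis .
qed

end

theorem lemma3:
  fixes M :: "'m measure"
    and F :: "nat \<Rightarrow> 'm measure"
    and K k :: nat
    and P :: "nat \<Rightarrow> real measure"
    and A :: "nat \<Rightarrow> 'm \<Rightarrow> nat"
    and Y :: "nat \<Rightarrow> 'm \<Rightarrow> real"
    and \<tau> :: "'m \<Rightarrow> nat"
    and \<psi> \<psi>' \<psi>'' :: "real \<Rightarrow> real"
    and \<Lambda> :: "real set"
    and b \<delta> :: real
  assumes M: "prob_space M"
    \<comment> \<open>filtration: F t contains the history up to round t (and any internal randomisation)\<close>
    and F_sub: "\<And>t. subalgebra M (F t)"
    and F_mono: "\<And>s t. s \<le> t \<Longrightarrow> sets (F s) \<subseteq> sets (F t)"
    \<comment> \<open>arms 1..K, each with a probability distribution on the reals\<close>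
    and K: "K \<ge> 1" and k: "k \<in> {1..K}"
    and P_prob: "\<And>j. j \<in> {1..K} \<Longrightarrow> prob_space (P j)"
    and P_sets: "\<And>j. j \<in> {1..K} \<Longrightarrow> sets (P j) = sets borel"
    \<comment> \<open>adaptive sampling: A t is chosen based on the past, Y t ~ P (A t) given the past\<close>
    and A_range: "\<And>t \<omega>. t \<ge> 1 \<Longrightarrow> \<omega> \<in> space M \<Longrightarrow> A t \<omega> \<in> {1..K}"
    and A_meas: "\<And>t. t \<ge> 1 \<Longrightarrow> A t \<in> measurable (F (t - 1)) (count_space UNIV)"
    and Y_meas: "\<And>t. t \<ge> 1 \<Longrightarrow> Y t \<in> borel_measurable (F t)"
    and Y_law: "\<And>t B. t \<ge> 1 \<Longrightarrow> B \<in> sets borel \<Longrightarrow>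
        AE \<omega> in M. real_cond_exp M (F (t - 1)) (\<lambda>\<omega>'. indicator B (Y t \<omega>')) \<omega>
                     = measure (P (A t \<omega>)) B"
    \<comment> \<open>\<psi>: nonnegative, C^2, strictly convex on the open interval \<Lambda> \<ni> 0, \<psi>(0) = \<psi>'(0) = 0\<close>
    and \<Lambda>_open: "open \<Lambda>" and \<Lambda>_int: "is_interval \<Lambda>" and \<Lambda>0: "0 \<in> \<Lambda>"
    and \<psi>_d1: "\<And>l. l \<in> \<Lambda> \<Longrightarrow> (\<psi> has_real_derivative \<psi>' l) (at l)"
    and \<psi>_d2: "\<And>l. l \<in> \<Lambda> \<Longrightarrow> (\<psi>' has_real_derivative \<psi>'' l) (at l)"
    and \<psi>_C2: "continuous_on \<Lambda> \<psi>''"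
    and \<psi>_convex: "strictly_convex_on \<Lambda> \<psi>"
    and \<psi>_nonneg: "\<And>l. l \<in> \<Lambda> \<Longrightarrow> \<psi> l \<ge> 0"
    and \<psi>_0: "\<psi> 0 = 0" and \<psi>'_0: "\<psi>' 0 = 0"
    \<comment> \<open>arm k is sub-\<psi> with mean \<mu>_k\<close>
    and mean_int: "integrable (P k) (\<lambda>y. y)"
    and subpsi_int: "\<And>l. l \<in> \<Lambda> \<Longrightarrow>
        integrable (P k) (\<lambda>y. exp (l * (y - (\<integral>z. z \<partial>P k))))"
    and subpsi: "\<And>l. l \<in> \<Lambda> \<Longrightarrow>
        ln (\<integral>y. exp (l * (y - (\<integral>z. z \<partial>P k))) \<partial>P k) \<le> \<psi> l"
    \<comment> \<open>arbitrary random time with at least b pulls of arm k almost surely\<close>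
    and \<tau>_meas: "\<tau> \<in> measurable M (count_space UNIV)"
    and b: "b \<ge> 3"
    and N_ge_b: "AE \<omega> in M. real (num_pulls A k (\<tau> \<omega>) \<omega>) \<ge> b"
    and \<delta>: "\<delta> \<ge> 1"
  shows "measure M {\<omega> \<in> space M.
            ereal (real (num_pulls A k (\<tau> \<omega>) \<omega>) / ln (ln (real (num_pulls A k (\<tau> \<omega>) \<omega>))))
              * psi_bregman \<Lambda> \<psi> (\<integral>z. z \<partial>P k) (sample_mean A Y k (\<tau> \<omega>) \<omega>) (\<integral>z. z \<partial>P k)
            \<ge> ereal (4 * exp 1 * (1 + 1 / ln (ln b)) * \<delta>)}
         \<le> 2 * exp (- \<delta>)"
proof -
  interpret sub_psi_arm M F k P A Y \<Lambda> \<psi> "\<integral>z. z \<partial>P k"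
    using M F_sub F_mono P_prob[OF k] P_sets[OF k] A_meas Y_meas Y_law \<Lambda>0 \<Lambda>_open \<Lambda>_int
      \<psi>_0 \<psi>_nonneg \<psi>_convex subpsi_int subpsi
    by (simp add: sub_psi_arm_def sub_psi_arm_axioms_def adaptive_sampling_def
        adaptive_sampling_axioms_def psi_function_def)
  show ?thesis by (rule prob_bregman_peeling[OF \<tau>_meas b \<delta> N_ge_b])
qed

end
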